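(* Let $\mathrm{M}$ be a simple matroid on a finite set $E$ and $\mathcal{G}$ a building set of its lattice of flats such that $(\mathrm{M},\mathcal{G})$ is flag, and let $e\in E$. Then the deletion $(\mathrm{M}\setminus e,\mathcal{G}\setminus e)$ is flag, where $\mathcal{G}\setminus e=\{S\in\mathcal{L}(\mathrm{M}\setminus e):\operatorname{cl}_{\mathrm{M}}(S)\in\mathcal{G}\}$.
   Context: Flats are ordered by inclusion, $\hat0=\varnothing$, $F\vee G=\operatorname{cl}(F\cup G)$. A building set of a geometric lattice $\mathcal{L}$ is $\mathcal{G}\subseteq\mathcal{L}\setminus\{\hat0\}$ such that for every $F\neq\hat0$ the join map $\prod_{G\in\max\mathcal{G}_{\leqslant F}}[\hat0,G]\to[\hat0,F]$ is a poset isomorphism. $\mathcal{G}\setminus e$ is a building set of $\mathcal{L}(\mathrm{M}\setminus e)$. $\mathcal{S}\subseteq\mathcal{G}$ is nested if for every antichain $A\subseteq\mathcal{S}$ and every $\{S_1,\dots,S_k\}\subseteq A$, $k\geqslant2$, $S_1\vee\dots\vee S_k\notin\mathcal{G}$. $\mathbf{N}(\mathcal{L},\mathcal{G})$ denotes the simplicial complex of nested sets contained in $\mathcal{G}\setminus\max\mathcal{G}$; a built matroid is flag if this complex is flag (all minimal non-faces have size $2$). *)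

theory Defs
  imports "HOL-Library.FuncSet"
begin

definition matroid :: "'a set \<Rightarrow> ('a set \<Rightarrow> bool) \<Rightarrow> bool" where
  "matroid E Ind \<longleftrightarrow> finite E \<and> (\<forall>X. Ind X \<longrightarrow> X \<subseteq> E) \<and> Ind {} \<and>
     (\<forall>X Y. Ind X \<and> Y \<subseteq> X \<longrightarrow> Ind Y) \<and>
     (\<forall>X Y. Ind X \<and> Ind Y \<and> card X < card Y \<longrightarrow> (\<exists>y \<in> Y - X. Ind (insert y X)))"

text \<open>Simple: no loops and no parallel pairs.\<close>
definition simple_matroid :: "'a set \<Rightarrow> ('a set \<Rightarrow> bool) \<Rightarrow> bool" where
  "simple_matroid E Ind \<longleftrightarrow> matroid E Ind \<and> (\<forall>x\<in>E. \<forall>y\<in>E. Ind {x, y})"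

definition rk :: "('a set \<Rightarrow> bool) \<Rightarrow> 'a set \<Rightarrow> nat" where
  "rk Ind X = Max (card ` {Y. Y \<subseteq> X \<and> Ind Y})"

definition cl :: "'a set \<Rightarrow> ('a set \<Rightarrow> bool) \<Rightarrow> 'a set \<Rightarrow> 'a set" where
  "cl E Ind X = {x \<in> E. rk Ind (insert x X) = rk Ind X}"

definition flat :: "'a set \<Rightarrow> ('a set \<Rightarrow> bool) \<Rightarrow> 'a set \<Rightarrow> bool" where
  "flat E Ind F \<longleftrightarrow> F \<subseteq> E \<and> cl E Ind F = F"

definition del_ground :: "'a set \<Rightarrow> 'a \<Rightarrow> 'a set" where
  "del_ground E e = E - {e}"

definition del_indep :: "('a set \<Rightarrow> bool) \<Rightarrow> 'a \<Rightarrow> 'a set \<Rightarrow> bool" where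
  "del_indep Ind e X \<longleftrightarrow> Ind X \<and> e \<notin> X"

definition maxset :: "'a set set \<Rightarrow> 'a set set" where
  "maxset \<G> = {G \<in> \<G>. \<not> (\<exists>H \<in> \<G>. G \<subset> H)}"

text \<open>Building set of the lattice of flats (bottom = empty flat, join = closure of union).\<close>
definition building_set :: "'a set \<Rightarrow> ('a set \<Rightarrow> bool) \<Rightarrow> 'a set set \<Rightarrow> bool" where
  "building_set E Ind \<G> \<longleftrightarrow>
     \<G> \<subseteq> {F. flat E Ind F \<and> F \<noteq> {}} \<and>
     (\<forall>F. flat E Ind F \<and> F \<noteq> {} \<longrightarrow>
        (let D = maxset {G \<in> \<G>. G \<subseteq> F};
             P = (\<Pi>\<^sub>E G\<in>D. {H. flat E Ind H \<and> H \<subseteq> G});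
             j = (\<lambda>x. cl E Ind (\<Union>G\<in>D. x G))
         in bij_betw j P {H. flat E Ind H \<and> H \<subseteq> F} \<and>
            (\<forall>x\<in>P. \<forall>y\<in>P. (\<forall>G\<in>D. x G \<subseteq> y G) \<longleftrightarrow> j x \<subseteq> j y)))"

definition antichain :: "'a set set \<Rightarrow> bool" where
  "antichain A \<longleftrightarrow> (\<forall>X\<in>A. \<forall>Y\<in>A. X \<subseteq> Y \<longrightarrow> X = Y)"

definition nested :: "'a set \<Rightarrow> ('a set \<Rightarrow> bool) \<Rightarrow> 'a set set \<Rightarrow> 'a set set \<Rightarrow> bool" where
  "nested E Ind \<G> S \<longleftrightarrow> S \<subseteq> \<G> \<and>
     (\<forall>A. A \<subseteq> S \<and> antichain A \<longrightarrow>
        (\<forall>T. T \<subseteq> A \<and> card T \<ge> 2 \<longrightarrow> cl E Ind (\<Union>T) \<notin> \<G>))"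

definition nested_face :: "'a set \<Rightarrow> ('a set \<Rightarrow> bool) \<Rightarrow> 'a set set \<Rightarrow> 'a set set \<Rightarrow> bool" where
  "nested_face E Ind \<G> S \<longleftrightarrow> S \<subseteq> \<G> - maxset \<G> \<and> nested E Ind \<G> S"

definition flag :: "'a set \<Rightarrow> ('a set \<Rightarrow> bool) \<Rightarrow> 'a set set \<Rightarrow> bool" where
  "flag E Ind \<G> \<longleftrightarrow>
     (\<forall>T. T \<subseteq> \<G> - maxset \<G> \<and> \<not> nested_face E Ind \<G> T \<and>
          (\<forall>T'. T' \<subset> T \<longrightarrow> nested_face E Ind \<G> T') \<longrightarrow> card T = 2)"

definition del_building :: "'a set \<Rightarrow> ('a set \<Rightarrow> bool) \<Rightarrow> 'a set set \<Rightarrow> 'a \<Rightarrow> 'a set set" where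
  "del_building E Ind \<G> e =
     {S. flat (del_ground E e) (del_indep Ind e) S \<and> cl E Ind S \<in> \<G>}"

end

theory Submission
  imports Defs
begin

text \<open>The closure map \<open>S \<mapsto> cl\<^sub>M S\<close> sends \<open>\<G> \<setminus> e\<close> into \<open>\<G>\<close>, reflects inclusion (since
  \<open>S = cl\<^sub>M S - {e}\<close> for every flat \<open>S\<close> of \<open>M \<setminus> e\<close>) and is compatible with joins: for
  \<open>T \<subseteq> \<G> \<setminus> e\<close>, the join of \<open>T\<close> lies in \<open>\<G> \<setminus> e\<close> iff the join of \<open>cl\<^sub>M ` T\<close> lies in \<open>\<G>\<close>,
  because \<open>cl\<^sub>M (cl\<^sub>M X - {e}) = cl\<^sub>M X\<close>. Hence it preserves and reflects nestedness and maps
  non-maximal elements to non-maximal ones, so it identifies the nested set complex of the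
  deletion with an induced subcomplex of that of \<open>(M, \<G>)\<close>; induced subcomplexes of flag
  complexes are flag.\<close>

lemma matroid_indep_subset: "matroid E Ind \<Longrightarrow> Ind X \<Longrightarrow> Y \<subseteq> X \<Longrightarrow> Ind Y"
  unfolding matroid_def by blast

lemma matroid_indep_finite: "matroid E Ind \<Longrightarrow> Ind X \<Longrightarrow> finite X"
  unfolding matroid_def by (meson finite_subset)

lemma matroid_augment:
  "matroid E Ind \<Longrightarrow> Ind X \<Longrightarrow> Ind Y \<Longrightarrow> card X < card Y \<Longrightarrow> \<exists>y \<in> Y - X. Ind (insert y X)"
  unfolding matroid_def by blast

lemma finite_indep_subsets: "matroid E Ind \<Longrightarrow> finite {Y. Y \<subseteq> X \<and> Ind Y}"
  unfolding matroid_def by (rule finite_subset[of _ "Pow E"]) auto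

lemma card_le_rk: "matroid E Ind \<Longrightarrow> Y \<subseteq> X \<Longrightarrow> Ind Y \<Longrightarrow> card Y \<le> rk Ind X"
  unfolding rk_def using finite_indep_subsets[of E Ind X] by (intro Max_ge) auto

lemma rk_attained:
  assumes "matroid E Ind"
  obtains I where "I \<subseteq> X" "Ind I" "card I = rk Ind X"
proof -
  have "{} \<in> {Y. Y \<subseteq> X \<and> Ind Y}"
    using assms unfolding matroid_def by auto
  then have "rk Ind X \<in> card ` {Y. Y \<subseteq> X \<and> Ind Y}"
    unfolding rk_def using finite_indep_subsets[OF assms] by (intro Max_in) auto
  then show thesis using that by auto
qed

lemma rk_mono: "matroid E Ind \<Longrightarrow> A \<subseteq> B \<Longrightarrow> rk Ind A \<le> rk Ind B"
  by (metis rk_attained card_le_rk order_trans)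

lemma indep_extends_to_basis:
  assumes m: "matroid E Ind" and "I \<subseteq> X" "Ind I"
  obtains J where "I \<subseteq> J" "J \<subseteq> X" "Ind J" "card J = rk Ind X"
  using assms(2,3)
proof (induction "rk Ind X - card I" arbitrary: I rule: less_induct)
  case less
  show ?case
  proof (cases "card I < rk Ind X")
    case False
    then have "card I = rk Ind X"
      using card_le_rk[OF m less.prems(2,3)] by simp
    then show ?thesis
      using less.prems by blast
  next
    case True
    obtain Y where "Y \<subseteq> X" "Ind Y" "card Y = rk Ind X"
      using rk_attained[OF m] .
    then obtain y where y: "y \<in> Y - I" "Ind (insert y I)"
      using matroid_augment[OF m less.prems(3)] True by metis
    have "card (insert y I) = card I + 1"
      using y matroid_indep_finite[OF m less.prems(3)] by simp
    then have "rk Ind X - card (insert y I) < rk Ind X - card I"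
      using True by simp
    moreover have "insert y I \<subseteq> X"
      using y \<open>Y \<subseteq> X\<close> less.prems(2) by blast
    ultimately show ?thesis
      using less.hyps[of "insert y I"] less.prems(1) y(2) by blast
  qed
qed

lemma rk_insert_eq_iff_dependent:
  assumes m: "matroid E Ind" and I: "I \<subseteq> A" "Ind I" "card I = rk Ind A" and "x \<notin> A"
  shows "rk Ind (insert x A) = rk Ind A \<longleftrightarrow> \<not> Ind (insert x I)"
proof
  assume "rk Ind (insert x A) = rk Ind A"
  moreover have "x \<notin> I"
    using \<open>x \<notin> A\<close> I(1) by blast
  then have "card (insert x I) = card I + 1"
    using matroid_indep_finite[OF m I(2)] by simp
  ultimately show "\<not> Ind (insert x I)"
    using card_le_rk[OF m, of "insert x I" "insert x A"] I by auto
next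
  assume dep: "\<not> Ind (insert x I)"
  show "rk Ind (insert x A) = rk Ind A"
  proof (rule ccontr)
    assume "rk Ind (insert x A) \<noteq> rk Ind A"
    moreover obtain J where J: "J \<subseteq> insert x A" "Ind J" "card J = rk Ind (insert x A)"
      using rk_attained[OF m] .
    ultimately have "card I < card J"
      using rk_mono[OF m subset_insertI, of A x] I by linarith
    then obtain y where y: "y \<in> J - I" "Ind (insert y I)"
      using matroid_augment[OF m I(2) J(2)] by blast
    with dep J have "y \<in> A" by auto
    then have "card (insert y I) \<le> rk Ind A"
      using card_le_rk[OF m _ y(2)] I by auto
    then show False
      using y I matroid_indep_finite[OF m I(2)] by simp
  qed
qed

lemma cl_subset_ground: "cl E Ind A \<subseteq> E"
  unfolding cl_def by auto

lemma subset_cl: "A \<subseteq> E \<Longrightarrow> A \<subseteq> cl E Ind A"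
  unfolding cl_def by (auto simp: insert_absorb)

lemma cl_mono:
  assumes m: "matroid E Ind" and "A \<subseteq> B"
  shows "cl E Ind A \<subseteq> cl E Ind B"
proof
  fix x assume x: "x \<in> cl E Ind A"
  show "x \<in> cl E Ind B"
  proof (cases "x \<in> B")
    case True
    then show ?thesis using x unfolding cl_def by (simp add: insert_absorb)
  next
    case False
    obtain I where I: "I \<subseteq> A" "Ind I" "card I = rk Ind A"
      using rk_attained[OF m] .
    obtain J where J: "I \<subseteq> J" "J \<subseteq> B" "Ind J" "card J = rk Ind B"
      using indep_extends_to_basis[OF m, of I B] I \<open>A \<subseteq> B\<close> by blast
    have "\<not> Ind (insert x I)"
      using x False \<open>A \<subseteq> B\<close> rk_insert_eq_iff_dependent[OF m I] unfolding cl_def by auto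
    then have "\<not> Ind (insert x J)"
      using J matroid_indep_subset[OF m] by (meson insert_mono)
    then show ?thesis
      using x rk_insert_eq_iff_dependent[OF m J(2-4) False] unfolding cl_def by simp
  qed
qed

lemma rk_cl:
  assumes m: "matroid E Ind" and "A \<subseteq> E"
  shows "rk Ind (cl E Ind A) = rk Ind A"
proof (rule antisym[OF _ rk_mono[OF m subset_cl[OF \<open>A \<subseteq> E\<close>]]], rule ccontr)
  assume "\<not> rk Ind (cl E Ind A) \<le> rk Ind A"
  moreover obtain I where I: "I \<subseteq> A" "Ind I" "card I = rk Ind A"
    using rk_attained[OF m] .
  moreover obtain J where J: "J \<subseteq> cl E Ind A" "Ind J" "card J = rk Ind (cl E Ind A)"
    using rk_attained[OF m] .
  ultimately obtain y where y: "y \<in> J - I" "Ind (insert y I)"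
    using matroid_augment[OF m I(2) J(2)] by auto
  have "card (insert y I) = rk Ind A + 1"
    using y I matroid_indep_finite[OF m I(2)] by simp
  then have "y \<notin> A"
    using card_le_rk[OF m _ y(2), of A] I by auto
  then show False
    using y J rk_insert_eq_iff_dependent[OF m I] unfolding cl_def by auto
qed

lemma cl_idem:
  assumes m: "matroid E Ind" and "A \<subseteq> E"
  shows "cl E Ind (cl E Ind A) = cl E Ind A"
proof
  show "cl E Ind A \<subseteq> cl E Ind (cl E Ind A)"
    by (rule subset_cl[OF cl_subset_ground])
  show "cl E Ind (cl E Ind A) \<subseteq> cl E Ind A"
  proof
    fix x assume x: "x \<in> cl E Ind (cl E Ind A)"
    show "x \<in> cl E Ind A"
    proof (rule ccontr)
      assume x_notin: "x \<notin> cl E Ind A"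
      obtain I where I: "I \<subseteq> A" "Ind I" "card I = rk Ind A"
        using rk_attained[OF m] .
      then have "I \<subseteq> cl E Ind A" "card I = rk Ind (cl E Ind A)"
        using subset_cl[OF \<open>A \<subseteq> E\<close>] rk_cl[OF m \<open>A \<subseteq> E\<close>] by auto
      then have "\<not> Ind (insert x I)"
        using x rk_insert_eq_iff_dependent[OF m _ I(2) _ x_notin] unfolding cl_def by auto
      then show False
        using x x_notin subset_cl[OF \<open>A \<subseteq> E\<close>] rk_insert_eq_iff_dependent[OF m I, of x]
        unfolding cl_def by auto
    qed
  qed
qed

lemma cl_eq_if_between:
  assumes m: "matroid E Ind" and "X \<subseteq> E" "X \<subseteq> Y" "Y \<subseteq> cl E Ind X"
  shows "cl E Ind Y = cl E Ind X"
  using cl_mono[OF m \<open>X \<subseteq> Y\<close>] cl_mono[OF m \<open>Y \<subseteq> cl E Ind X\<close>] cl_idem[OF m \<open>X \<subseteq> E\<close>]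
  by blast

lemma cl_Union_cl:
  assumes m: "matroid E Ind" and "\<Union>T \<subseteq> E"
  shows "cl E Ind (\<Union>(cl E Ind ` T)) = cl E Ind (\<Union>T)"
proof (rule cl_eq_if_between[OF m \<open>\<Union>T \<subseteq> E\<close>])
  show "\<Union>T \<subseteq> \<Union>(cl E Ind ` T)"
    using subset_cl[of _ E Ind] \<open>\<Union>T \<subseteq> E\<close> by blast
  show "\<Union>(cl E Ind ` T) \<subseteq> cl E Ind (\<Union>T)"
    using cl_mono[OF m Union_upper] by blast
qed

lemma rk_del_indep:
  assumes "e \<notin> X"
  shows "rk (del_indep Ind e) X = rk Ind X"
proof -
  have "{Y. Y \<subseteq> X \<and> del_indep Ind e Y} = {Y. Y \<subseteq> X \<and> Ind Y}"
    using assms unfolding del_indep_def by auto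
  then show ?thesis
    unfolding rk_def by simp
qed

lemma cl_del:
  assumes "e \<notin> X"
  shows "cl (del_ground E e) (del_indep Ind e) X = cl E Ind X - {e}"
proof -
  have "rk (del_indep Ind e) (insert x X) = rk Ind (insert x X)" if "x \<noteq> e" for x
    using assms that by (intro rk_del_indep) simp
  then show ?thesis
    unfolding cl_def del_ground_def using rk_del_indep[OF assms, of Ind] by auto
qed

lemma flat_delD:
  assumes "flat (del_ground E e) (del_indep Ind e) S"
  shows "S \<subseteq> E - {e}" "cl E Ind S - {e} = S"
proof -
  show "S \<subseteq> E - {e}"
    using assms unfolding flat_def del_ground_def by blast
  then have "e \<notin> S"
    by blast
  then show "cl E Ind S - {e} = S"
    using assms cl_del[of e S E Ind] unfolding flat_def by simp
qed

lemma flat_del_subset_iff: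
  assumes m: "matroid E Ind"
    and "flat (del_ground E e) (del_indep Ind e) S" "flat (del_ground E e) (del_indep Ind e) T"
  shows "S \<subseteq> T \<longleftrightarrow> cl E Ind S \<subseteq> cl E Ind T"
proof
  show "S \<subseteq> T \<Longrightarrow> cl E Ind S \<subseteq> cl E Ind T"
    by (rule cl_mono[OF m])
  assume "cl E Ind S \<subseteq> cl E Ind T"
  then have "cl E Ind S - {e} \<subseteq> cl E Ind T - {e}"
    by blast
  then show "S \<subseteq> T"
    unfolding flat_delD(2)[OF assms(2)] flat_delD(2)[OF assms(3)] .
qed

lemma cl_del_mem_del_building:
  assumes m: "matroid E Ind" and X: "X \<subseteq> E - {e}"
  shows "cl (del_ground E e) (del_indep Ind e) X \<in> del_building E Ind \<G> e \<longleftrightarrow> cl E Ind X \<in> \<G>"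
proof -
  let ?C = "cl E Ind X"
  have "X \<subseteq> E" "e \<notin> X"
    using X by auto
  have cl_del_X: "cl (del_ground E e) (del_indep Ind e) X = ?C - {e}"
    using cl_del[OF \<open>e \<notin> X\<close>] .
  have "X \<subseteq> ?C - {e}"
    using subset_cl[OF \<open>X \<subseteq> E\<close>] \<open>e \<notin> X\<close> by blast
  then have cl_C: "cl E Ind (?C - {e}) = ?C"
    by (rule cl_eq_if_between[OF m \<open>X \<subseteq> E\<close>]) blast
  have "cl (del_ground E e) (del_indep Ind e) (?C - {e}) = ?C - {e}"
    using cl_del[of e "?C - {e}" E Ind] unfolding cl_C by simp
  moreover have "?C - {e} \<subseteq> del_ground E e"
    using cl_subset_ground[of E Ind X] unfolding del_ground_def by blast
  ultimately have "flat (del_ground E e) (del_indep Ind e) (?C - {e})"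
    unfolding flat_def by simp
  then show ?thesis
    unfolding del_building_def cl_del_X using cl_C by simp
qed

lemma del_building_join_iff:
  assumes m: "matroid E Ind" and T: "T \<subseteq> del_building E Ind \<G> e"
  shows "cl (del_ground E e) (del_indep Ind e) (\<Union>T) \<in> del_building E Ind \<G> e
    \<longleftrightarrow> cl E Ind (\<Union>(cl E Ind ` T)) \<in> \<G>"
proof -
  have "\<Union>T \<subseteq> E - {e}"
  proof (rule Union_least)
    fix S assume "S \<in> T"
    then have "flat (del_ground E e) (del_indep Ind e) S"
      using T unfolding del_building_def by blast
    then show "S \<subseteq> E - {e}"
      by (rule flat_delD(1))
  qed
  moreover have "cl E Ind (\<Union>(cl E Ind ` T)) = cl E Ind (\<Union>T)"
    using calculation by (intro cl_Union_cl[OF m]) blast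
  ultimately show ?thesis
    using cl_del_mem_del_building[OF m] by simp
qed

lemma inj_on_order_embedding:
  assumes "\<And>X Y. X \<in> D \<Longrightarrow> Y \<in> D \<Longrightarrow> X \<subseteq> Y \<longleftrightarrow> f X \<subseteq> f Y"
  shows "inj_on f D"
proof (rule inj_onI)
  fix X Y assume "X \<in> D" "Y \<in> D" "f X = f Y"
  then have "X \<subseteq> Y" "Y \<subseteq> X"
    using assms[OF \<open>X \<in> D\<close> \<open>Y \<in> D\<close>] assms[OF \<open>Y \<in> D\<close> \<open>X \<in> D\<close>] by simp_all
  then show "X = Y"
    by (rule subset_antisym)
qed

lemma antichain_image_iff:
  assumes emb: "\<And>X Y. X \<in> D \<Longrightarrow> Y \<in> D \<Longrightarrow> X \<subseteq> Y \<longleftrightarrow> f X \<subseteq> f Y" and "A \<subseteq> D"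
  shows "antichain (f ` A) \<longleftrightarrow> antichain A"
proof -
  have pointwise: "(f X \<subseteq> f Y \<longrightarrow> f X = f Y) \<longleftrightarrow> (X \<subseteq> Y \<longrightarrow> X = Y)" if "X \<in> A" "Y \<in> A" for X Y
  proof -
    have "X \<in> D" "Y \<in> D"
      using that \<open>A \<subseteq> D\<close> by auto
    then have "X \<subseteq> Y \<longleftrightarrow> f X \<subseteq> f Y" "f X = f Y \<longleftrightarrow> X = Y"
      using emb inj_on_eq_iff[OF inj_on_order_embedding[OF emb]] by simp_all
    then show ?thesis
      by simp
  qed
  have "antichain (f ` A) \<longleftrightarrow> (\<forall>X\<in>A. \<forall>Y\<in>A. f X \<subseteq> f Y \<longrightarrow> f X = f Y)"
    unfolding antichain_def by simp
  also have "\<dots> \<longleftrightarrow> antichain A"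
    unfolding antichain_def by (intro ball_cong refl pointwise)
  finally show ?thesis .
qed

lemma image_diff_maxset_subset:
  assumes emb: "\<And>X Y. X \<in> D \<Longrightarrow> Y \<in> D \<Longrightarrow> X \<subseteq> Y \<longleftrightarrow> f X \<subseteq> f Y" and "f ` D \<subseteq> \<G>"
  shows "f ` (D - maxset D) \<subseteq> \<G> - maxset \<G>"
proof
  fix Z assume "Z \<in> f ` (D - maxset D)"
  then obtain X where X: "X \<in> D" "X \<notin> maxset D" "Z = f X"
    by blast
  then obtain Y where "Y \<in> D" "X \<subset> Y"
    unfolding maxset_def by blast
  then have "f X \<subseteq> f Y" "\<not> f Y \<subseteq> f X"
    using emb[OF X(1) \<open>Y \<in> D\<close>] emb[OF \<open>Y \<in> D\<close> X(1)] by auto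
  then have "f X \<subset> f Y"
    by blast
  moreover have "f X \<in> \<G>" "f Y \<in> \<G>"
    using assms(2) X(1) \<open>Y \<in> D\<close> by auto
  ultimately show "Z \<in> \<G> - maxset \<G>"
    unfolding maxset_def using X(3) by blast
qed

lemma antichain_subset: "antichain A \<Longrightarrow> T \<subseteq> A \<Longrightarrow> antichain T"
  unfolding antichain_def by blast

lemma nested_iff_antichains:
  "nested E Ind \<G> S \<longleftrightarrow>
    S \<subseteq> \<G> \<and> (\<forall>T\<subseteq>S. antichain T \<and> 2 \<le> card T \<longrightarrow> cl E Ind (\<Union>T) \<notin> \<G>)"
  unfolding nested_def by (meson antichain_subset order_refl subset_trans)

lemma nested_image_iff:
  fixes f :: "'a set \<Rightarrow> 'b set"
  assumes emb: "\<And>X Y. X \<in> D \<Longrightarrow> Y \<in> D \<Longrightarrow> X \<subseteq> Y \<longleftrightarrow> f X \<subseteq> f Y"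
    and "f ` D \<subseteq> \<G>"
    and join: "\<And>T. T \<subseteq> D \<Longrightarrow> cl E' Ind' (\<Union>T) \<in> D \<longleftrightarrow> cl E Ind (\<Union>(f ` T)) \<in> \<G>"
    and "S \<subseteq> D"
  shows "nested E' Ind' D S \<longleftrightarrow> nested E Ind \<G> (f ` S)"
proof -
  have pointwise:
    "(antichain (f ` T) \<and> 2 \<le> card (f ` T) \<longrightarrow> cl E Ind (\<Union>(f ` T)) \<notin> \<G>) \<longleftrightarrow>
     (antichain T \<and> 2 \<le> card T \<longrightarrow> cl E' Ind' (\<Union>T) \<notin> D)" if "T \<subseteq> S" for T
  proof -
    have "T \<subseteq> D"
      using that \<open>S \<subseteq> D\<close> by blast
    then have "antichain (f ` T) \<longleftrightarrow> antichain T" "card (f ` T) = card T"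
        "cl E' Ind' (\<Union>T) \<in> D \<longleftrightarrow> cl E Ind (\<Union>(f ` T)) \<in> \<G>"
      using antichain_image_iff[OF emb] join
        card_image[OF inj_on_subset[OF inj_on_order_embedding[OF emb]]] by blast+
    then show ?thesis
      by simp
  qed
  have "f ` S \<subseteq> \<G>"
    using \<open>f ` D \<subseteq> \<G>\<close> \<open>S \<subseteq> D\<close> by blast
  then have "nested E Ind \<G> (f ` S) \<longleftrightarrow>
      (\<forall>T\<subseteq>S. antichain (f ` T) \<and> 2 \<le> card (f ` T) \<longrightarrow> cl E Ind (\<Union>(f ` T)) \<notin> \<G>)"
    by (simp only: nested_iff_antichains all_subset_image simp_thms)
  also have "\<dots> \<longleftrightarrow> (\<forall>T\<subseteq>S. antichain T \<and> 2 \<le> card T \<longrightarrow> cl E' Ind' (\<Union>T) \<notin> D)"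
    using pointwise by blast
  also have "\<dots> \<longleftrightarrow> nested E' Ind' D S"
    using \<open>S \<subseteq> D\<close> by (simp add: nested_iff_antichains)
  finally show ?thesis ..
qed

lemma nested_face_image_iff:
  fixes f :: "'a set \<Rightarrow> 'b set"
  assumes emb: "\<And>X Y. X \<in> D \<Longrightarrow> Y \<in> D \<Longrightarrow> X \<subseteq> Y \<longleftrightarrow> f X \<subseteq> f Y"
    and "f ` D \<subseteq> \<G>"
    and "\<And>T. T \<subseteq> D \<Longrightarrow> cl E' Ind' (\<Union>T) \<in> D \<longleftrightarrow> cl E Ind (\<Union>(f ` T)) \<in> \<G>"
    and "S \<subseteq> D - maxset D"
  shows "nested_face E' Ind' D S \<longleftrightarrow> nested_face E Ind \<G> (f ` S)"
proof -
  have "f ` S \<subseteq> \<G> - maxset \<G>"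
    by (rule order_trans[OF image_mono[OF assms(4)] image_diff_maxset_subset[OF emb assms(2)]])
  moreover have "S \<subseteq> D"
    using assms(4) by blast
  ultimately show ?thesis
    unfolding nested_face_def using nested_image_iff[OF assms(1-3)] assms(4) by simp
qed

lemma minimal_nonfaces_card_pullback:
  assumes Q_min: "\<forall>T. T \<subseteq> W \<and> \<not> Q T \<and> (\<forall>T'. T' \<subset> T \<longrightarrow> Q T') \<longrightarrow> card T = n"
    and inj: "inj_on f V" and "f ` V \<subseteq> W"
    and face_iff: "\<And>S. S \<subseteq> V \<Longrightarrow> P S \<longleftrightarrow> Q (f ` S)"
  shows "\<forall>T. T \<subseteq> V \<and> \<not> P T \<and> (\<forall>T'. T' \<subset> T \<longrightarrow> P T') \<longrightarrow> card T = n"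
proof (intro allI impI, elim conjE)
  fix T assume T: "T \<subseteq> V" "\<not> P T" and P_min: "\<forall>T'. T' \<subset> T \<longrightarrow> P T'"
  have "Q U" if "U \<subset> f ` T" for U
  proof -
    obtain T' where "T' \<subseteq> T" "U = f ` T'"
      using \<open>U \<subset> f ` T\<close> by (meson psubset_imp_subset subset_image_iff)
    with \<open>U \<subset> f ` T\<close> have "T' \<subset> T"
      by blast
    then show "Q U"
      using P_min face_iff \<open>U = f ` T'\<close> T(1) by blast
  qed
  moreover have "f ` T \<subseteq> W" "\<not> Q (f ` T)"
    using T face_iff \<open>f ` V \<subseteq> W\<close> by auto
  ultimately have "card (f ` T) = n"
    using Q_min by blast
  then show "card T = n"
    using card_image[OF inj_on_subset[OF inj T(1)]] by simp
qed

theorem lemma3p18: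
  fixes E :: "'a set" and Ind :: "'a set \<Rightarrow> bool" and \<G> :: "'a set set" and e :: 'a
  assumes "simple_matroid E Ind"
    and "building_set E Ind \<G>"
    and "flag E Ind \<G>"
    and "e \<in> E"
  shows "flag (del_ground E e) (del_indep Ind e) (del_building E Ind \<G> e)"
proof -
  have m: "matroid E Ind"
    using assms(1) unfolding simple_matroid_def by simp
  let ?D = "del_building E Ind \<G> e"
  have emb: "\<And>X Y. X \<in> ?D \<Longrightarrow> Y \<in> ?D \<Longrightarrow> X \<subseteq> Y \<longleftrightarrow> cl E Ind X \<subseteq> cl E Ind Y"
    using flat_del_subset_iff[OF m] unfolding del_building_def by blast
  have img: "cl E Ind ` ?D \<subseteq> \<G>"
    unfolding del_building_def by blast
  have inj: "inj_on (cl E Ind) (?D - maxset ?D)"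
    by (rule inj_on_subset[OF inj_on_order_embedding[of ?D "cl E Ind", OF emb] Diff_subset])
  have vertices: "cl E Ind ` (?D - maxset ?D) \<subseteq> \<G> - maxset \<G>"
    by (rule image_diff_maxset_subset[of ?D "cl E Ind", OF emb img])
  have faces: "\<And>S. S \<subseteq> ?D - maxset ?D \<Longrightarrow>
      nested_face (del_ground E e) (del_indep Ind e) ?D S \<longleftrightarrow> nested_face E Ind \<G> (cl E Ind ` S)"
    by (rule nested_face_image_iff[of ?D "cl E Ind", OF emb img del_building_join_iff[OF m]])
  show ?thesis
    unfolding flag_def
    by (rule minimal_nonfaces_card_pullback[OF assms(3)[unfolded flag_def] inj vertices faces])
qed

end
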